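(* Let $Y$ be a geodesic space, $D\subseteq Y$, $S$ a semigroup of nonexpansive maps $D\to D$ endowed with the Borel $\sigma$-algebra of the compact-open topology, $(X,\mu)$ a probability space, $T:X\to X$ an ergodic measure-preserving transformation, $w:X\to S$ measurable, and $a_n(x)=w(x)w(Tx)\cdots w(T^{n-1}x)$ ($a_0$ the identity). Fix $y\in D$ with $\int_X d(y,a_1(x)y)\,d\mu(x)<\infty$ and let $A=\lim_{n\to\infty}\frac1n\int_X d(y,a_n(x)y)\,d\mu(x)$. Write $D_n(x)=d(y,a_n(x)y)$ and $D_n(x,k)=d(y,a_{n-k}(T^kx)y)$ for $0\le k\le n$. Let $E$ be the set of $x\in X$ such that for every $\varepsilon>0$ there exist $M\in\mathbb{N}$ and infinitely many $n\in\mathbb{N}$ with $D_n(x)-D_n(x,k)\ge(A-\varepsilon)k$ for all integers $k\in[M,n]$. Let $x\in E$ with $\lim_{n\to\infty}D_n(x)/n=A>0$. Then for all sequences $(\alpha_i)\subseteq(0,1]$ and $(p_i)\subseteq\mathbb{N}$ there exist sequences $(K_i),(n_i)\subseteq\mathbb{N}$ such that for all $i\ge1$: (i) $p_i\le K_i$, $n_i\in(K_{i+1},n_{i+1})$, and $D_{n_{i+1}}(x)\ge\max\{D_{n_i}(x),An_i\}$; (ii) for all integers $k\in[K_i,n_i]$, $|D_k(x)-Ak|\le Ak/2^i$ and \[(1-\min\{1/2^i,\alpha_i\})D_k(x)+d(a_k(x)y,a_{n_i}(x)y)\le D_{n_i}(x).\]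
   Context: A geodesic space is a metric space in which any two points are joined by a distance-preserving path from a real interval. A map is nonexpansive if it is $1$-Lipschitz. *)

theory Defs
  imports "HOL-Probability.Probability"
begin

definition geodesic_space :: "'a::metric_space itself \<Rightarrow> bool" where
  "geodesic_space _ \<longleftrightarrow>
     (\<forall>p q::'a. \<exists>\<gamma>::real \<Rightarrow> 'a. \<gamma> 0 = p \<and> \<gamma> (dist p q) = q \<and>
        (\<forall>s\<in>{0..dist p q}. \<forall>t\<in>{0..dist p q}. dist (\<gamma> s) (\<gamma> t) = \<bar>s - t\<bar>))"

definition nonexpansive_on :: "'a::metric_space set \<Rightarrow> ('a \<Rightarrow> 'a) \<Rightarrow> bool" where
  "nonexpansive_on D f \<longleftrightarrow> f ` D \<subseteq> D \<and> (\<forall>u\<in>D. \<forall>v\<in>D. dist (f u) (f v) \<le> dist u v)"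

definition nonexp_semigroup :: "'a::metric_space set \<Rightarrow> ('a \<Rightarrow> 'a) set \<Rightarrow> bool" where
  "nonexp_semigroup D S \<longleftrightarrow> (\<forall>f\<in>S. nonexpansive_on D f) \<and> (\<forall>f\<in>S. \<forall>g\<in>S. f \<circ> g \<in> S)"

definition compact_open_topology :: "'a::metric_space set \<Rightarrow> ('a \<Rightarrow> 'a) set \<Rightarrow> ('a \<Rightarrow> 'a) topology" where
  "compact_open_topology D S = topology_generated_by
     {{f\<in>S. f ` K \<subseteq> U} | K U. compact K \<and> K \<subseteq> D \<and> openin (top_of_set D) U}"

definition borel_measure_of :: "'b topology \<Rightarrow> 'b measure" where
  "borel_measure_of X = sigma (topspace X) {U. openin X U}"

definition measure_preserving_map :: "'x measure \<Rightarrow> ('x \<Rightarrow> 'x) \<Rightarrow> bool" where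
  "measure_preserving_map M T \<longleftrightarrow> T \<in> measurable M M \<and>
     (\<forall>A\<in>sets M. emeasure M (T -` A \<inter> space M) = emeasure M A)"

definition ergodic_map :: "'x measure \<Rightarrow> ('x \<Rightarrow> 'x) \<Rightarrow> bool" where
  "ergodic_map M T \<longleftrightarrow> measure_preserving_map M T \<and>
     (\<forall>A\<in>sets M. T -` A \<inter> space M = A \<longrightarrow> measure M A = 0 \<or> measure M A = 1)"

primrec cocycle :: "('x \<Rightarrow> 'a \<Rightarrow> 'a) \<Rightarrow> ('x \<Rightarrow> 'x) \<Rightarrow> nat \<Rightarrow> 'x \<Rightarrow> 'a \<Rightarrow> 'a" where
  "cocycle w T 0 x = id"
| "cocycle w T (Suc n) x = cocycle w T n x \<circ> w ((T ^^ n) x)"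

end

theory Submission
  imports Defs
begin

text \<open>
  Everything happens along the single orbit of \<open>x\<close>. Nonexpansiveness and the cocycle identity
  \<open>a(n, x) = a(k, x) \<circ> a(n - k, T^k x)\<close> give \<open>d(a(k, x) y, a(n, x) y) \<le> D(n, x, k)\<close>, so the
  second inequality of (ii) only needs \<open>(1 - \<delta>) D(k, x) \<le> D(n, x) - D(n, x, k)\<close>.
  Since \<open>D(k, x) / k \<longrightarrow> A > 0\<close>, eventually \<open>D(k, x) \<le> (1 + \<delta>/4) A k\<close>; since \<open>x \<in> E\<close>, there are
  infinitely many \<open>n\<close> with \<open>D(n, x) - D(n, x, k) \<ge> (1 - \<delta>/4) A k\<close> for all \<open>k\<close> beyond a threshold.
  As \<open>(1 - \<delta>)(1 + \<delta>/4) \<le> 1 - \<delta>/4\<close>, every such \<open>n\<close> works. Taking \<open>\<delta> = min (1/2^i) \<alpha>\<^sub>i\<close> at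
  stage \<open>i\<close> and using \<open>D(n, x) \<longrightarrow> \<infinity>\<close>, the \<open>n\<^sub>i\<close> are chosen recursively beyond the
  thresholds \<open>K\<^sub>i\<^sub>+\<^sub>1\<close>.
\<close>

lemma cocycle_add:
  "cocycle w T (k + m) x = cocycle w T k x \<circ> cocycle w T m ((T ^^ k) x)"
proof (induction m)
  case (Suc m)
  have "(T ^^ (k + m)) x = (T ^^ m) ((T ^^ k) x)"
    by (metis add.commute comp_apply funpow_add)
  with Suc show ?case by (simp add: o_assoc)
qed simp

lemma nonexpansive_on_id: "nonexpansive_on D id"
  by (simp add: nonexpansive_on_def)

lemma nonexpansive_on_comp:
  assumes f: "nonexpansive_on D f" and g: "nonexpansive_on D g"
  shows "nonexpansive_on D (f \<circ> g)"
  unfolding nonexpansive_on_def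
proof (intro conjI ballI)
  show "(f \<circ> g) ` D \<subseteq> D"
    using f g by (auto simp: nonexpansive_on_def image_subset_iff)
next
  fix u v assume "u \<in> D" "v \<in> D"
  then have "dist (f (g u)) (f (g v)) \<le> dist (g u) (g v)" "dist (g u) (g v) \<le> dist u v"
    using f g by (auto simp: nonexpansive_on_def image_subset_iff)
  then show "dist ((f \<circ> g) u) ((f \<circ> g) v) \<le> dist u v" by simp
qed

lemma nonexpansive_on_cocycle:
  assumes "\<And>j. nonexpansive_on D (w ((T ^^ j) x))"
  shows "nonexpansive_on D (cocycle w T n x)"
proof (induction n)
  case (Suc n)
  then show ?case by (simp only: cocycle.simps nonexpansive_on_comp assms)
qed (simp only: cocycle.simps nonexpansive_on_id)

lemma dist_cocycle_le:
  assumes w: "\<And>j. nonexpansive_on D (w ((T ^^ j) x))" and y: "y \<in> D" and "k \<le> n"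
  shows "dist (cocycle w T k x y) (cocycle w T n x y)
           \<le> dist y (cocycle w T (n - k) ((T ^^ k) x) y)"
proof -
  let ?b = "cocycle w T (n - k) ((T ^^ k) x)"
  have "nonexpansive_on D ?b"
    using w by (intro nonexpansive_on_cocycle) (metis comp_apply funpow_add)
  then have "?b y \<in> D" using y by (auto simp: nonexpansive_on_def)
  moreover have "nonexpansive_on D (cocycle w T k x)"
    using w by (rule nonexpansive_on_cocycle)
  moreover have "cocycle w T n x = cocycle w T k x \<circ> ?b"
    using cocycle_add[of w T k "n - k" x] \<open>k \<le> n\<close> by simp
  ultimately show ?thesis
    using y by (simp add: nonexpansive_on_def)
qed

lemma eventually_abs_diff_le_of_tendsto_div:
  fixes d :: "nat \<Rightarrow> real"
  assumes "(\<lambda>n. d n / real n) \<longlonglongrightarrow> A" and "0 < c"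
  shows "eventually (\<lambda>n. \<bar>d n - A * real n\<bar> \<le> c * real n) sequentially"
proof -
  have "eventually (\<lambda>n. \<bar>d n / real n - A\<bar> < c) sequentially"
    using tendstoD[OF assms] by (simp add: dist_real_def)
  moreover have "eventually (\<lambda>n. 1 \<le> n) sequentially" by simp
  ultimately show ?thesis
  proof eventually_elim
    case (elim n)
    then have "\<bar>d n - A * real n\<bar> = \<bar>d n / real n - A\<bar> * real n"
      by (simp add: abs_mult[symmetric] field_simps)
    with elim show ?case by simp
  qed
qed

lemma filterlim_at_top_of_tendsto_div:
  fixes d :: "nat \<Rightarrow> real"
  assumes "(\<lambda>n. d n / real n) \<longlonglongrightarrow> A" and "0 < A"
  shows "filterlim d at_top sequentially"
proof -
  have "filterlim (\<lambda>n. d n / real n * real n) at_top sequentially"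
    by (rule filterlim_tendsto_pos_mult_at_top[OF assms filterlim_real_sequentially])
  moreover have "eventually (\<lambda>n. d n / real n * real n = d n) sequentially"
    using eventually_ge_at_top[of 1] by eventually_elim simp
  ultimately show ?thesis
    using filterlim_cong[OF refl refl, of "\<lambda>n. d n / real n * real n" d] by blast
qed

lemma gap_inequality_of_linear_estimates:
  fixes \<delta> t s g s' :: real
  assumes \<delta>: "0 < \<delta>" "\<delta> \<le> 1"
    and s: "\<bar>s - t\<bar> \<le> \<delta> / 4 * t" and gap: "(1 - \<delta> / 4) * t + g \<le> s'"
  shows "(1 - \<delta>) * s + g \<le> s'"
proof -
  have "0 \<le> \<delta> / 4 * t" using s abs_ge_zero order_trans by blast
  with \<delta> have "0 \<le> t" by (simp add: zero_le_mult_iff)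
  have "(1 - \<delta>) * s \<le> (1 - \<delta>) * ((1 + \<delta> / 4) * t)"
    using abs_le_D1[OF s] \<delta> by (intro mult_left_mono) (auto simp: algebra_simps)
  also have "\<dots> = (1 - \<delta> / 4) * t - \<delta> * (2 + \<delta>) / 4 * t"
    by (simp add: field_simps)
  also have "\<dots> \<le> (1 - \<delta> / 4) * t"
    using \<delta> \<open>0 \<le> t\<close> by simp
  finally show ?thesis using gap by linarith
qed

lemma frequent_escape_times:
  fixes d :: "nat \<Rightarrow> real" and e :: "nat \<Rightarrow> nat \<Rightarrow> real"
  assumes lim: "(\<lambda>n. d n / real n) \<longlonglongrightarrow> A" and A: "0 < A"
    and E: "\<forall>\<epsilon>>0. \<exists>m::nat. \<exists>\<^sub>\<infinity>n::nat. \<forall>k::nat. m \<le> k \<and> k \<le> n \<longrightarrow>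
              d n - e n k \<ge> (A - \<epsilon>) * real k"
    and \<eta>: "0 < \<eta>"
  obtains K where "\<And>k. K \<le> k \<Longrightarrow> \<bar>d k - A * real k\<bar> \<le> \<eta> * (A * real k)"
    and "\<And>b c. \<exists>n>b. c \<le> d n \<and>
           (\<forall>k. K \<le> k \<and> k \<le> n \<longrightarrow> (1 - \<eta>) * (A * real k) + e n k \<le> d n)"
proof -
  have "eventually (\<lambda>k. \<bar>d k - A * real k\<bar> \<le> \<eta> * A * real k) sequentially"
    using A \<eta> by (intro eventually_abs_diff_le_of_tendsto_div[OF lim]) simp
  then obtain N where N: "\<And>k. N \<le> k \<Longrightarrow> \<bar>d k - A * real k\<bar> \<le> \<eta> * (A * real k)"
    by (auto simp: eventually_sequentially mult.assoc)
  obtain m where m: "\<exists>\<^sub>\<infinity>n. \<forall>k. m \<le> k \<and> k \<le> n \<longrightarrow> d n - e n k \<ge> (A - \<eta> * A) * real k"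
    using E mult_pos_pos[OF \<eta> A] by blast
  have "\<exists>n>b. c \<le> d n \<and>
          (\<forall>k. max N m \<le> k \<and> k \<le> n \<longrightarrow> (1 - \<eta>) * (A * real k) + e n k \<le> d n)" for b c
  proof -
    have "eventually (\<lambda>n. b < n \<and> c \<le> d n) sequentially"
      using filterlim_at_top_of_tendsto_div[OF lim A]
      by (intro eventually_conj) (simp_all add: filterlim_at_top)
    with m have "\<exists>\<^sub>F n in sequentially. (b < n \<and> c \<le> d n) \<and>
        (\<forall>k. m \<le> k \<and> k \<le> n \<longrightarrow> d n - e n k \<ge> (A - \<eta> * A) * real k)"
      unfolding cofinite_eq_sequentially by (rule frequently_eventually_conj)
    then show ?thesis
      by (auto elim!: frequentlyE simp: algebra_simps)
  qed
  with N show thesis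
    by (intro that[of "max N m"]) auto
qed

lemma frequent_escape_times_uniform:
  fixes d :: "nat \<Rightarrow> real" and e :: "nat \<Rightarrow> nat \<Rightarrow> real" and \<eta> :: "'i \<Rightarrow> real"
  assumes lim: "(\<lambda>n. d n / real n) \<longlonglongrightarrow> A" and A: "0 < A"
    and E: "\<forall>\<epsilon>>0. \<exists>m::nat. \<exists>\<^sub>\<infinity>n::nat. \<forall>k::nat. m \<le> k \<and> k \<le> n \<longrightarrow>
              d n - e n k \<ge> (A - \<epsilon>) * real k"
    and \<eta>: "\<And>i. i \<in> I \<Longrightarrow> 0 < \<eta> i"
  obtains K where "\<And>i k. i \<in> I \<Longrightarrow> K i \<le> k \<Longrightarrow> \<bar>d k - A * real k\<bar> \<le> \<eta> i * (A * real k)"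
    and "\<And>i b c. i \<in> I \<Longrightarrow> \<exists>n>b. c \<le> d n \<and>
           (\<forall>k. K i \<le> k \<and> k \<le> n \<longrightarrow> (1 - \<eta> i) * (A * real k) + e n k \<le> d n)"
proof -
  have "\<exists>K. (\<forall>k\<ge>K. \<bar>d k - A * real k\<bar> \<le> \<eta> i * (A * real k)) \<and>
          (\<forall>b c. \<exists>n>b. c \<le> d n \<and>
             (\<forall>k. K \<le> k \<and> k \<le> n \<longrightarrow> (1 - \<eta> i) * (A * real k) + e n k \<le> d n))"
    if "i \<in> I" for i
    by (rule frequent_escape_times[OF lim A E \<eta>[OF that]]) blast
  then show thesis
    using that by metis
qed

lemma linear_escape_scales:
  fixes d :: "nat \<Rightarrow> real" and e g :: "nat \<Rightarrow> nat \<Rightarrow> real"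
  assumes lim: "(\<lambda>n. d n / real n) \<longlonglongrightarrow> A" and A: "0 < A"
    and E: "\<forall>\<epsilon>>0. \<exists>m::nat. \<exists>\<^sub>\<infinity>n::nat. \<forall>k::nat. m \<le> k \<and> k \<le> n \<longrightarrow>
              d n - e n k \<ge> (A - \<epsilon>) * real k"
    and g_le_e: "\<And>k n. k \<le> n \<Longrightarrow> g k n \<le> e n k"
  shows "\<forall>(\<alpha>::nat \<Rightarrow> real) (p::nat \<Rightarrow> nat). (\<forall>i\<ge>1. 0 < \<alpha> i \<and> \<alpha> i \<le> 1) \<longrightarrow>
    (\<exists>K n :: nat \<Rightarrow> nat. \<forall>i\<ge>1.
       p i \<le> K i \<and> K (Suc i) < n i \<and> n i < n (Suc i) \<and>
       d (n (Suc i)) \<ge> max (d (n i)) (A * real (n i)) \<and>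
       (\<forall>k::nat. K i \<le> k \<and> k \<le> n i \<longrightarrow>
          \<bar>d k - A * real k\<bar> \<le> A * real k / 2 ^ i \<and>
          (1 - min (1 / 2 ^ i) (\<alpha> i)) * d k + g k (n i) \<le> d (n i)))"
proof (intro allI impI)
  fix \<alpha> :: "nat \<Rightarrow> real" and p :: "nat \<Rightarrow> nat"
  assume \<alpha>: "\<forall>i\<ge>1. 0 < \<alpha> i \<and> \<alpha> i \<le> 1"
  define \<delta> where "\<delta> i = min (1 / 2 ^ i) (\<alpha> i)" for i :: nat
  have \<delta>: "0 < \<delta> i" "\<delta> i \<le> 1" "\<delta> i \<le> 1 / 2 ^ i" if "1 \<le> i" for i
    using \<alpha> that by (auto simp: \<delta>_def)
  obtain L where
    close: "\<And>i k. 1 \<le> i \<Longrightarrow> L i \<le> k \<Longrightarrow> \<bar>d k - A * real k\<bar> \<le> \<delta> i / 4 * (A * real k)" and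
    frequent: "\<And>i b c. 1 \<le> i \<Longrightarrow> \<exists>m>b. c \<le> d m \<and>
      (\<forall>k. L i \<le> k \<and> k \<le> m \<longrightarrow> (1 - \<delta> i / 4) * (A * real k) + e m k \<le> d m)"
    by (rule frequent_escape_times_uniform[OF lim A E, of "{i. 1 \<le> i}" "\<lambda>i. \<delta> i / 4"])
      (use \<delta> in auto)
  define good where "good i m \<longleftrightarrow>
    (\<forall>k. L i \<le> k \<and> k \<le> m \<longrightarrow> (1 - \<delta> i / 4) * (A * real k) + e m k \<le> d m)" for i m
  define K where "K i = max (p i) (L i)" for i
  define next_scale where "next_scale i m m' \<longleftrightarrow> K (Suc (Suc i)) < m' \<and> m < m' \<and>
    max (d m) (A * real m) \<le> d m' \<and> good (Suc i) m'" for i m m'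
  have "\<exists>m'. next_scale i m m'" for i m
    using frequent[of "Suc i" "max (K (Suc (Suc i))) m" "max (d m) (A * real m)"]
    by (auto simp: next_scale_def good_def)
  then obtain n where "\<And>i. next_scale i (n i) (n (Suc i))"
    using dependent_nat_choice[of "\<lambda>_ _. True" next_scale] by blast
  then have n: "\<And>i. K (Suc (Suc i)) < n (Suc i) \<and> n i < n (Suc i) \<and>
      max (d (n i)) (A * real (n i)) \<le> d (n (Suc i)) \<and> good (Suc i) (n (Suc i))"
    by (simp add: next_scale_def)
  show "\<exists>K n :: nat \<Rightarrow> nat. \<forall>i\<ge>1.
       p i \<le> K i \<and> K (Suc i) < n i \<and> n i < n (Suc i) \<and>
       d (n (Suc i)) \<ge> max (d (n i)) (A * real (n i)) \<and>
       (\<forall>k::nat. K i \<le> k \<and> k \<le> n i \<longrightarrow>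
          \<bar>d k - A * real k\<bar> \<le> A * real k / 2 ^ i \<and>
          (1 - min (1 / 2 ^ i) (\<alpha> i)) * d k + g k (n i) \<le> d (n i))"
  proof (rule exI[of _ K], rule exI[of _ n], intro allI impI conjI)
    fix i :: nat assume i: "1 \<le> i"
    then obtain j where j: "i = Suc j" by (cases i) auto
    show "p i \<le> K i" by (simp add: K_def)
    show "K (Suc i) < n i" using n[of j] j by simp
    show "n i < n (Suc i)" using n[of i] by simp
    show "max (d (n i)) (A * real (n i)) \<le> d (n (Suc i))" using n[of i] by simp
    fix k assume k: "K i \<le> k \<and> k \<le> n i"
    have dk: "\<bar>d k - A * real k\<bar> \<le> \<delta> i / 4 * (A * real k)"
      using close[OF i] k by (simp add: K_def)
    also have "\<dots> \<le> 1 / 2 ^ i * (A * real k)"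
      using \<delta>[OF i] A by (intro mult_right_mono) auto
    finally show "\<bar>d k - A * real k\<bar> \<le> A * real k / 2 ^ i" by simp
    have "good i (n i)" using n[of j] j by simp
    then have gap: "(1 - \<delta> i / 4) * (A * real k) + g k (n i) \<le> d (n i)"
      using k g_le_e[of k "n i"] by (fastforce simp: good_def K_def)
    show "(1 - min (1 / 2 ^ i) (\<alpha> i)) * d k + g k (n i) \<le> d (n i)"
      using \<delta>(1,2)[OF i] dk gap unfolding \<delta>_def[symmetric]
      by (rule gap_inequality_of_linear_estimates)
  qed
qed

theorem lemma3p1:
  fixes D :: "'a::metric_space set" and S :: "('a \<Rightarrow> 'a) set"
    and M :: "'x measure" and T :: "'x \<Rightarrow> 'x" and w :: "'x \<Rightarrow> 'a \<Rightarrow> 'a"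
    and y :: 'a and A :: real and x :: 'x
  assumes geo: "geodesic_space TYPE('a)"
    and S: "nonexp_semigroup D S"
    and P: "prob_space M"
    and erg: "ergodic_map M T"
    and wS: "\<forall>z\<in>space M. w z \<in> S"
    and wmeas: "w \<in> measurable M (borel_measure_of (compact_open_topology D S))"
    and yD: "y \<in> D"
    and int1: "(\<integral>\<^sup>+ z. ennreal (dist y (cocycle w T 1 z y)) \<partial>M) < \<infinity>"
    and Adef: "(\<lambda>n. (\<integral>\<^sup>+ z. ennreal (dist y (cocycle w T n z y)) \<partial>M) / of_nat n)
                 \<longlonglongrightarrow> ennreal A"
    and xM: "x \<in> space M"
    and xE: "\<forall>\<epsilon>>0. \<exists>m::nat. \<exists>\<^sub>\<infinity>n::nat. \<forall>k::nat. m \<le> k \<and> k \<le> n \<longrightarrow>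
               dist y (cocycle w T n x y) - dist y (cocycle w T (n - k) ((T ^^ k) x) y)
                 \<ge> (A - \<epsilon>) * real k"
    and lim: "(\<lambda>n. dist y (cocycle w T n x y) / real n) \<longlonglongrightarrow> A"
    and Apos: "A > 0"
  shows "\<forall>(\<alpha>::nat \<Rightarrow> real) (p::nat \<Rightarrow> nat). (\<forall>i\<ge>1. 0 < \<alpha> i \<and> \<alpha> i \<le> 1) \<longrightarrow>
    (\<exists>K n :: nat \<Rightarrow> nat. \<forall>i\<ge>1.
       p i \<le> K i \<and> K (Suc i) < n i \<and> n i < n (Suc i) \<and>
       dist y (cocycle w T (n (Suc i)) x y)
         \<ge> max (dist y (cocycle w T (n i) x y)) (A * real (n i)) \<and>
       (\<forall>k::nat. K i \<le> k \<and> k \<le> n i \<longrightarrow>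
          \<bar>dist y (cocycle w T k x y) - A * real k\<bar> \<le> A * real k / 2 ^ i \<and>
          (1 - min (1 / 2 ^ i) (\<alpha> i)) * dist y (cocycle w T k x y)
            + dist (cocycle w T k x y) (cocycle w T (n i) x y)
            \<le> dist y (cocycle w T (n i) x y)))"
proof -
  have T: "T \<in> space M \<rightarrow> space M"
    using erg by (auto simp: ergodic_map_def measure_preserving_map_def measurable_def)
  have "(T ^^ j) x \<in> space M" for j
    using xM T by (induction j) auto
  then have "nonexpansive_on D (w ((T ^^ j) x))" for j
    using S wS by (auto simp: nonexp_semigroup_def)
  then have "dist (cocycle w T k x y) (cocycle w T n x y)
               \<le> dist y (cocycle w T (n - k) ((T ^^ k) x) y)" if "k \<le> n" for k n
    using yD that by (rule dist_cocycle_le)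
  then show ?thesis
    by (rule linear_escape_scales[OF lim Apos xE])
qed

end
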